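(* Let $m$ be a positive integer. If $\|m\alpha\|\ge\|q_{k-1}\alpha\|+\|q_k\alpha\|$ for some $k\ge1$, then $\mathrm{ab}_\alpha(m)<q_k$.
   Context: $\alpha\in(0,1)$ irrational, $\alpha=[0;a_1,a_2,\ldots]$ with positive integers $a_i$, $a_1\ge2$; $q_{-1}=0$, $q_0=1$, $q_1=a_1$, $q_k=a_kq_{k-1}+q_{k-2}$ ($k\ge2$). $\|x\|$ is the distance from $x$ to the nearest integer. Sturmian words of slope $\alpha$: with $R(\rho)=\{\rho+\alpha\}$ on $[0,1)$ and either $I_0=[0,1-\alpha)$ or $I_0=(0,1-\alpha]$ ($I_1$ its complement), $\mathbf{s}_{\rho,\alpha}$ has $n$-th letter $0$ iff $R^n(\rho)\in I_0$; they share a set $\mathcal{L}_\alpha$ of finite factors. An abelian power of period $m$ and exponent $e$ is a concatenation of $e$ pairwise abelian equivalent words (same numbers of $0$s and $1$s) of length $m$; $\mathrm{ab}_\alpha(m)$ is the maximum exponent of an abelian power of period $m$ in $\mathcal{L}_\alpha$ (it is known that $\mathrm{ab}_\alpha(m)=\lfloor 1/\|m\alpha\|\rfloor$). *)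

theory Defs
  imports Complex_Main "HOL-Library.Multiset"
begin

text \<open>The partial quotients are a_k = floor(1/x_(k-1)) for k >= 1, so that
  alpha = [0; a_1, a_2, ...] for irrational alpha in (0,1).\<close>

fun cf_rem :: "real \<Rightarrow> nat \<Rightarrow> real" where
  "cf_rem \<alpha> 0 = \<alpha>"
| "cf_rem \<alpha> (Suc k) = frac (1 / cf_rem \<alpha> k)"

definition cf_a :: "real \<Rightarrow> nat \<Rightarrow> nat" where
  "cf_a \<alpha> k = nat \<lfloor>1 / cf_rem \<alpha> (k - 1)\<rfloor>"

text \<open>Denominators of convergents: q_0 = 1, q_1 = a_1, q_k = a_k q_(k-1) + q_(k-2).
  (q_(-1) = 0 is only used to get q_1 = a_1.)\<close>

fun cf_q :: "real \<Rightarrow> nat \<Rightarrow> nat" where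
  "cf_q \<alpha> 0 = 1"
| "cf_q \<alpha> (Suc 0) = cf_a \<alpha> 1"
| "cf_q \<alpha> (Suc (Suc k)) = cf_a \<alpha> (Suc (Suc k)) * cf_q \<alpha> (Suc k) + cf_q \<alpha> k"

definition dist_int :: "real \<Rightarrow> real" where
  "dist_int x = \<bar>x - of_int (round x)\<bar>"

definition sturm_I0 :: "bool \<Rightarrow> real \<Rightarrow> real set" where
  "sturm_I0 b \<alpha> = (if b then {0..<1 - \<alpha>} else {0<..1 - \<alpha>})"

definition sturm_letter :: "bool \<Rightarrow> real \<Rightarrow> real \<Rightarrow> nat \<Rightarrow> nat" where
  "sturm_letter b \<rho> \<alpha> n = (if frac (\<rho> + real n * \<alpha>) \<in> sturm_I0 b \<alpha> then 0 else 1)"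

definition sturm_factors :: "real \<Rightarrow> nat list set" where
  "sturm_factors \<alpha> = {w. \<exists>b \<rho> i. 0 \<le> \<rho> \<and> \<rho> < 1 \<and>
       w = map (sturm_letter b \<rho> \<alpha>) [i..<i + length w]}"

definition abelian_equiv :: "nat list \<Rightarrow> nat list \<Rightarrow> bool" where
  "abelian_equiv u v \<longleftrightarrow> mset u = mset v"

definition abelian_power :: "nat list \<Rightarrow> nat \<Rightarrow> nat \<Rightarrow> bool" where
  "abelian_power w m e \<longleftrightarrow> (\<exists>ws. length ws = e \<and> w = concat ws \<and>
       (\<forall>u\<in>set ws. length u = m) \<and> (\<forall>u\<in>set ws. \<forall>v\<in>set ws. abelian_equiv u v))"

definition ab :: "real \<Rightarrow> nat \<Rightarrow> nat" where
  "ab \<alpha> m = Sup {e. \<exists>w\<in>sturm_factors \<alpha>. abelian_power w m e}"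

end

theory Submission
  imports Defs
begin

text \<open>A Sturmian word of slope \<alpha> is a mechanical word: its factor of length L starting at
  position i contains \<lfloor>\<rho> + (i + L)\<alpha>\<rfloor> - \<lfloor>\<rho> + i\<alpha>\<rfloor> letters 1 (or the same with ceilings), a
  number that differs from L\<alpha> by less than 1. In an abelian power of period m and exponent e
  all e blocks contain the same number c of ones, so |e c - e m\<alpha>| < 1 and hence
  e \<parallel>m\<alpha>\<parallel> < 1. On the other side, for \<alpha> < 1/2 the distance \<parallel>q_j \<alpha>\<parallel> equals the product
  \<theta>_j = x_0 x_1 ... x_j of the remainders of the Gauss map, and the determinant identity
  q_k \<theta>_(k-1) + q_(k-1) \<theta>_k = 1 together with q_(k-1) \<le> q_k gives q_k (\<theta>_(k-1) + \<theta>_k) \<ge> 1.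
  Under the hypothesis this yields q_k \<parallel>m\<alpha>\<parallel> \<ge> 1 > e \<parallel>m\<alpha>\<parallel>, i.e. e < q_k.\<close>

(* Keeps cf_rem \<alpha> (Suc k) folded, so that the recurrence cf_rem_mult_cf_a_plus_cf_rem applies. *)
declare cf_rem.simps(2) [simp del]

lemma cf_rem_not_rational: "\<alpha> \<notin> \<rat> \<Longrightarrow> cf_rem \<alpha> k \<notin> \<rat>"
proof (induction k)
  case (Suc k)
  show ?case
  proof
    assume "cf_rem \<alpha> (Suc k) \<in> \<rat>"
    then have "1 / cf_rem \<alpha> k - of_int \<lfloor>1 / cf_rem \<alpha> k\<rfloor> \<in> \<rat>" by (simp add: cf_rem.simps frac_def)
    then have "1 / cf_rem \<alpha> k \<in> \<rat>" by (metis Rats_add Rats_of_int diff_add_cancel)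
    then have "cf_rem \<alpha> k \<in> \<rat>" by (metis Rats_inverse inverse_eq_divide inverse_inverse_eq)
    with Suc show False by simp
  qed
qed simp

fun cf_p :: "real \<Rightarrow> nat \<Rightarrow> int" where
  "cf_p \<alpha> 0 = 0"
| "cf_p \<alpha> (Suc 0) = 1"
| "cf_p \<alpha> (Suc (Suc k)) = int (cf_a \<alpha> (Suc (Suc k))) * cf_p \<alpha> (Suc k) + cf_p \<alpha> k"

(* x_0 x_1 ... x_k, which turns out to be the error |q_k \<alpha> - p_k| of the k-th convergent. *)
fun cf_rem_prod :: "real \<Rightarrow> nat \<Rightarrow> real" where
  "cf_rem_prod \<alpha> 0 = \<alpha>"
| "cf_rem_prod \<alpha> (Suc k) = cf_rem_prod \<alpha> k * cf_rem \<alpha> (Suc k)"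

lemma cf_a_Suc: "cf_a \<alpha> (Suc k) = nat \<lfloor>1 / cf_rem \<alpha> k\<rfloor>"
  by (simp add: cf_a_def)

context
  fixes \<alpha> :: real
  assumes alpha_pos: "0 < \<alpha>" and alpha_less_1: "\<alpha> < 1" and alpha_irrational: "\<alpha> \<notin> \<rat>"
begin

lemma cf_rem_bounds: "0 < cf_rem \<alpha> k \<and> cf_rem \<alpha> k < 1"
proof (cases k)
  case (Suc j)
  have "cf_rem \<alpha> k \<noteq> 0" using cf_rem_not_rational[OF alpha_irrational, of k] by auto
  moreover have "0 \<le> cf_rem \<alpha> k" "cf_rem \<alpha> k < 1" using Suc by (simp_all add: cf_rem.simps frac_lt_1)
  ultimately show ?thesis by simp
qed (simp add: alpha_pos alpha_less_1)

lemma cf_a_Suc_ge_1: "cf_a \<alpha> (Suc k) \<ge> 1"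
proof -
  have "1 < 1 / cf_rem \<alpha> k" using cf_rem_bounds[of k] by simp
  then have "1 \<le> \<lfloor>1 / cf_rem \<alpha> k\<rfloor>" by (simp add: one_le_floor)
  then show ?thesis unfolding cf_a_Suc by linarith
qed

lemma cf_rem_mult_cf_a_plus_cf_rem: "cf_rem \<alpha> k * (real (cf_a \<alpha> (Suc k)) + cf_rem \<alpha> (Suc k)) = 1"
proof -
  have "0 \<le> \<lfloor>1 / cf_rem \<alpha> k\<rfloor>" using cf_rem_bounds[of k] by simp
  then have "real (cf_a \<alpha> (Suc k)) + cf_rem \<alpha> (Suc k) = 1 / cf_rem \<alpha> k"
    by (simp add: cf_a_Suc cf_rem.simps frac_def)
  then show ?thesis using cf_rem_bounds[of k] by simp
qed

lemma less_half_if_cf_a_1_ge_2: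
  assumes "cf_a \<alpha> 1 \<ge> 2"
  shows "\<alpha> < 1 / 2"
proof -
  have "\<alpha> * 2 < \<alpha> * (real (cf_a \<alpha> 1) + cf_rem \<alpha> 1)"
    using assms alpha_pos cf_rem_bounds[of 1] by (intro mult_strict_left_mono) auto
  also have "\<dots> = 1" using cf_rem_mult_cf_a_plus_cf_rem[of 0] by simp
  finally show ?thesis by simp
qed

lemma cf_q_mono: "cf_q \<alpha> k \<le> cf_q \<alpha> (Suc k)"
proof (cases k)
  case 0
  then show ?thesis using cf_a_Suc_ge_1[of 0] by simp
next
  case (Suc j)
  have "cf_q \<alpha> (Suc j) \<le> cf_a \<alpha> (Suc (Suc j)) * cf_q \<alpha> (Suc j)"
    using cf_a_Suc_ge_1[of "Suc j"] by simp
  then show ?thesis unfolding Suc cf_q.simps by (rule trans_le_add1)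
qed

lemma cf_rem_prod_pos: "0 < cf_rem_prod \<alpha> k"
  by (induction k) (simp_all add: alpha_pos cf_rem_bounds)

lemma cf_rem_prod_le: "cf_rem_prod \<alpha> k \<le> \<alpha>"
proof (induction k)
  case (Suc k)
  have "cf_rem_prod \<alpha> k * cf_rem \<alpha> (Suc k) \<le> cf_rem_prod \<alpha> k"
    using cf_rem_prod_pos[of k] cf_rem_bounds[of "Suc k"] by (intro mult_left_le) auto
  with Suc show ?case by simp
qed simp

lemma cf_q_mult_cf_rem_prod_identity:
  "real (cf_q \<alpha> (Suc k)) * cf_rem_prod \<alpha> k + real (cf_q \<alpha> k) * cf_rem_prod \<alpha> (Suc k) = 1"
proof (induction k)
  case 0
  show ?case using cf_rem_mult_cf_a_plus_cf_rem[of 0] by (simp add: algebra_simps)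
next
  case (Suc k)
  have "real (cf_q \<alpha> (Suc (Suc k))) * cf_rem_prod \<alpha> (Suc k)
        + real (cf_q \<alpha> (Suc k)) * cf_rem_prod \<alpha> (Suc (Suc k))
     = real (cf_q \<alpha> (Suc k)) * cf_rem_prod \<alpha> k
         * (cf_rem \<alpha> (Suc k) * (real (cf_a \<alpha> (Suc (Suc k))) + cf_rem \<alpha> (Suc (Suc k))))
       + real (cf_q \<alpha> k) * cf_rem_prod \<alpha> (Suc k)"
    by (simp add: algebra_simps)
  also have "\<dots> = 1" using Suc cf_rem_mult_cf_a_plus_cf_rem[of "Suc k"] by simp
  finally show ?case .
qed

lemma cf_q_mult_minus_cf_p: "real (cf_q \<alpha> k) * \<alpha> - of_int (cf_p \<alpha> k) = (-1) ^ k * cf_rem_prod \<alpha> k"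
proof (induction k rule: induct_nat_012)
  case 1
  show ?case using cf_rem_mult_cf_a_plus_cf_rem[of 0] by (simp add: algebra_simps)
next
  case (ge2 k)
  have "real (cf_q \<alpha> (Suc (Suc k))) * \<alpha> - of_int (cf_p \<alpha> (Suc (Suc k)))
    = real (cf_a \<alpha> (Suc (Suc k))) * (real (cf_q \<alpha> (Suc k)) * \<alpha> - of_int (cf_p \<alpha> (Suc k)))
      + (real (cf_q \<alpha> k) * \<alpha> - of_int (cf_p \<alpha> k))"
    by (simp add: algebra_simps)
  also have "\<dots> = real (cf_a \<alpha> (Suc (Suc k))) * ((-1) ^ Suc k * cf_rem_prod \<alpha> (Suc k))
      + (-1) ^ k * cf_rem_prod \<alpha> k"
    using ge2 by simp
  also have "\<dots> = (-1) ^ k * cf_rem_prod \<alpha> k * (1 - real (cf_a \<alpha> (Suc (Suc k))) * cf_rem \<alpha> (Suc k))"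
    by (simp add: algebra_simps)
  also have "1 - real (cf_a \<alpha> (Suc (Suc k))) * cf_rem \<alpha> (Suc k) = cf_rem \<alpha> (Suc k) * cf_rem \<alpha> (Suc (Suc k))"
    using cf_rem_mult_cf_a_plus_cf_rem[of "Suc k"] by (simp add: algebra_simps)
  finally show ?case by simp
qed simp

lemma dist_int_cf_q:
  assumes "\<alpha> < 1 / 2"
  shows "dist_int (real (cf_q \<alpha> k) * \<alpha>) = cf_rem_prod \<alpha> k"
proof -
  have err: "\<bar>real (cf_q \<alpha> k) * \<alpha> - of_int (cf_p \<alpha> k)\<bar> = cf_rem_prod \<alpha> k"
    using cf_q_mult_minus_cf_p[of k] cf_rem_prod_pos[of k] by (simp add: abs_mult)
  moreover have "cf_rem_prod \<alpha> k < 1 / 2" using cf_rem_prod_le[of k] assms by simp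
  ultimately have "round (real (cf_q \<alpha> k) * \<alpha>) = cf_p \<alpha> k" by (intro round_unique') simp
  with err show ?thesis by (simp add: dist_int_def)
qed

lemma one_le_cf_q_mult_cf_rem_prod_sum:
  "1 \<le> real (cf_q \<alpha> (Suc k)) * (cf_rem_prod \<alpha> k + cf_rem_prod \<alpha> (Suc k))"
proof -
  have "real (cf_q \<alpha> k) * cf_rem_prod \<alpha> (Suc k) \<le> real (cf_q \<alpha> (Suc k)) * cf_rem_prod \<alpha> (Suc k)"
    using cf_q_mono[of k] cf_rem_prod_pos[of "Suc k"] by (intro mult_right_mono) auto
  then show ?thesis using cf_q_mult_cf_rem_prod_identity[of k] by (simp add: algebra_simps)
qed

end

(* Floors count the letters 1 for I_0 = [0, 1 - \<alpha>), ceilings for I_0 = (0, 1 - \<alpha>]. *)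
definition floor_or_ceiling :: "bool \<Rightarrow> real \<Rightarrow> int" where
  "floor_or_ceiling b t = (if b then \<lfloor>t\<rfloor> else \<lceil>t\<rceil>)"

lemma floor_or_ceiling_diff_approx:
  "\<bar>(s - t) - real_of_int (floor_or_ceiling b s - floor_or_ceiling b t)\<bar> < 1"
  unfolding floor_or_ceiling_def by (cases b) (simp_all add: abs_less_iff; linarith)+

lemma floor_add_less_1:
  assumes "0 < \<alpha>" "\<alpha> < 1"
  shows "\<lfloor>t + \<alpha>\<rfloor> = \<lfloor>t\<rfloor> + (if frac t < 1 - \<alpha> then 0 else 1)"
proof -
  have "\<lfloor>\<alpha>\<rfloor> = 0" "frac \<alpha> = \<alpha>" using assms by (simp_all add: floor_eq_iff frac_eq)
  then show ?thesis by (simp add: floor_add[of t \<alpha>])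
qed

lemma ceiling_add_less_1:
  assumes "0 < \<alpha>" "\<alpha> < 1"
  shows "\<lceil>t + \<alpha>\<rceil> = \<lceil>t\<rceil> + (if 0 < frac t \<and> frac t \<le> 1 - \<alpha> then 0 else 1)"
proof -
  have f: "0 \<le> frac t" "frac t < 1" by (simp_all add: frac_lt_1)
  have "\<lceil>t + \<alpha>\<rceil> = \<lceil>(frac t + \<alpha>) + of_int \<lfloor>t\<rfloor>\<rceil>" "\<lceil>t\<rceil> = \<lceil>frac t + of_int \<lfloor>t\<rfloor>\<rceil>"
    by (simp_all add: frac_def)
  then have "\<lceil>t + \<alpha>\<rceil> = \<lceil>frac t + \<alpha>\<rceil> + \<lfloor>t\<rfloor>" "\<lceil>t\<rceil> = \<lceil>frac t\<rceil> + \<lfloor>t\<rfloor>"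
    by (simp_all only: ceiling_add_of_int)
  moreover have "\<lceil>frac t\<rceil> = (if frac t = 0 then 0 else 1)"
    using f by (simp add: ceiling_eq_iff del: frac_eq_0_iff frac_gt_0_iff frac_ge_0)
  moreover have "\<lceil>frac t + \<alpha>\<rceil> = (if frac t + \<alpha> \<le> 1 then 1 else 2)"
    using f assms by (simp add: ceiling_eq_iff del: frac_eq_0_iff frac_gt_0_iff frac_ge_0)
  ultimately show ?thesis
    using f assms by (auto simp del: frac_eq_0_iff frac_gt_0_iff frac_ge_0)
qed

lemma sturm_letter_eq_floor_or_ceiling_diff:
  assumes "0 < \<alpha>" "\<alpha> < 1"
  shows "int (sturm_letter b \<rho> \<alpha> n) =
    floor_or_ceiling b (\<rho> + real (Suc n) * \<alpha>) - floor_or_ceiling b (\<rho> + real n * \<alpha>)"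
proof -
  define t where "t = \<rho> + real n * \<alpha>"
  have step: "\<rho> + real (Suc n) * \<alpha> = t + \<alpha>" by (simp add: t_def algebra_simps)
  show ?thesis
    unfolding sturm_letter_def sturm_I0_def floor_or_ceiling_def t_def[symmetric] step
    using floor_add_less_1[OF assms, of t] ceiling_add_less_1[OF assms, of t] by (cases b) simp_all
qed

lemma sum_sturm_letters:
  assumes "0 < \<alpha>" "\<alpha> < 1"
  shows "int (sum_list (map (sturm_letter b \<rho> \<alpha>) [i..<i + L])) =
    floor_or_ceiling b (\<rho> + real (i + L) * \<alpha>) - floor_or_ceiling b (\<rho> + real i * \<alpha>)"
  by (induction L) (simp_all add: sturm_letter_eq_floor_or_ceiling_diff[OF assms])

lemma length_abelian_power: "abelian_power w m e \<Longrightarrow> length w = e * m"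
  by (auto simp: abelian_power_def length_concat sum_list_triv cong: map_cong)

lemma dvd_sum_list_abelian_power:
  assumes "abelian_power w m e"
  shows "e dvd sum_list w"
proof -
  obtain ws where ws: "length ws = e" "w = concat ws" "\<forall>u\<in>set ws. \<forall>v\<in>set ws. mset u = mset v"
    using assms unfolding abelian_power_def abelian_equiv_def by blast
  show ?thesis
  proof (cases ws)
    case (Cons u ws')
    have "sum_list v = sum_list u" if "v \<in> set ws" for v
      using that ws(3) Cons by (metis list.set_intros(1) sum_mset_sum_list)
    then have "map sum_list ws = map (\<lambda>_. sum_list u) ws" by simp
    then have "sum_list (map sum_list ws) = e * sum_list u" using ws(1) by (simp only: sum_list_triv of_nat_id)
    moreover have "sum_list (concat ws) = sum_list (map sum_list ws)" by (induction ws) auto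
    ultimately have "sum_list w = e * sum_list u" using ws(2) by simp
    then show ?thesis by simp
  qed (use ws in simp)
qed

lemma abelian_power_in_sturm_factors_mult_dist_int_less_1:
  assumes "0 < \<alpha>" "\<alpha> < 1" "w \<in> sturm_factors \<alpha>" "abelian_power w m e"
  shows "real e * dist_int (real m * \<alpha>) < 1"
proof -
  have len: "length w = e * m" using length_abelian_power[OF assms(4)] .
  obtain b \<rho> i where w: "w = map (sturm_letter b \<rho> \<alpha>) [i..<i + e * m]"
    using assms(3) unfolding sturm_factors_def len[symmetric] by blast
  obtain c where c: "sum_list w = e * c" using dvd_sum_list_abelian_power[OF assms(4)] by blast
  define s t where "s = \<rho> + real (i + e * m) * \<alpha>" and "t = \<rho> + real i * \<alpha>"
  have "int (e * c) = floor_or_ceiling b s - floor_or_ceiling b t"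
    using sum_sturm_letters[OF assms(1,2), of b \<rho> i "e * m"] w c by (simp add: s_def t_def)
  then have "real (e * c) = real_of_int (floor_or_ceiling b s - floor_or_ceiling b t)"
    by (metis of_int_of_nat_eq)
  moreover have "s - t = real e * (real m * \<alpha>)" by (simp add: s_def t_def algebra_simps)
  ultimately have "\<bar>real e * (real m * \<alpha>) - real (e * c)\<bar> < 1"
    using floor_or_ceiling_diff_approx[of s t b] by simp
  have "dist_int (real m * \<alpha>) \<le> \<bar>real m * \<alpha> - real c\<bar>"
    unfolding dist_int_def using round_diff_minimal[of "real m * \<alpha>" "int c"] by simp
  then have "real e * dist_int (real m * \<alpha>) \<le> real e * \<bar>real m * \<alpha> - real c\<bar>"
    by (rule mult_left_mono) simp
  also have "\<dots> = \<bar>real e * (real m * \<alpha>) - real (e * c)\<bar>"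
    by (metis abs_mult abs_of_nat of_nat_mult right_diff_distrib)
  finally show ?thesis using \<open>\<bar>real e * (real m * \<alpha>) - real (e * c)\<bar> < 1\<close> by linarith
qed

lemma ab_less_if_one_le_mult_dist_int:
  assumes "0 < \<alpha>" "\<alpha> < 1" "1 \<le> real N * dist_int (real m * \<alpha>)"
  shows "ab \<alpha> m < N"
proof -
  define E where "E = {e. \<exists>w\<in>sturm_factors \<alpha>. abelian_power w m e}"
  have bound: "e < N" if e: "e \<in> E" for e
  proof -
    obtain w where "w \<in> sturm_factors \<alpha>" "abelian_power w m e" using e unfolding E_def by blast
    then have "real e * dist_int (real m * \<alpha>) < 1"
      by (rule abelian_power_in_sturm_factors_mult_dist_int_less_1[OF assms(1,2)])
    then have "real e * dist_int (real m * \<alpha>) < real N * dist_int (real m * \<alpha>)"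
      using assms(3) by linarith
    then have "real e < real N" by (rule mult_right_less_imp_less) (simp add: dist_int_def)
    then show ?thesis by simp
  qed
  have "N > 0" using assms(3) by (cases "N = 0") simp_all
  have "Sup E < N"
  proof (cases "E = {}")
    case False
    have "Sup E \<le> N - 1"
    proof (rule cSup_least[OF False])
      show "e \<le> N - 1" if "e \<in> E" for e using bound[OF that] by linarith
    qed
    then show ?thesis using \<open>N > 0\<close> by linarith
  qed (simp add: \<open>N > 0\<close>)
  then show ?thesis unfolding ab_def E_def .
qed

theorem lemma3p1:
  fixes \<alpha> :: real and m k :: nat
  assumes "0 < \<alpha>" "\<alpha> < 1" "\<alpha> \<notin> \<rat>"
    and "cf_a \<alpha> 1 \<ge> 2"
    and "m > 0" "k \<ge> 1"
    and "dist_int (real m * \<alpha>) \<ge>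
           dist_int (real (cf_q \<alpha> (k - 1)) * \<alpha>) + dist_int (real (cf_q \<alpha> k) * \<alpha>)"
  shows "ab \<alpha> m < cf_q \<alpha> k"
proof -
  obtain j where k: "k = Suc j" using \<open>k \<ge> 1\<close> by (cases k) auto
  have half: "\<alpha> < 1 / 2" using less_half_if_cf_a_1_ge_2[OF assms(1-4)] .
  have "1 \<le> real (cf_q \<alpha> k) * (cf_rem_prod \<alpha> j + cf_rem_prod \<alpha> k)"
    using one_le_cf_q_mult_cf_rem_prod_sum[OF assms(1-3)] k by simp
  also have "\<dots> \<le> real (cf_q \<alpha> k) * dist_int (real m * \<alpha>)"
    using assms(7) dist_int_cf_q[OF assms(1-3) half] k by (intro mult_left_mono) auto
  finally show ?thesis using ab_less_if_one_le_mult_dist_int[OF assms(1,2)] by blast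
qed

end
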